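(* Let $L \geq 2$, $m = L+1$, $\gamma = (L+1)^3$, and for $i \in \{0,\ldots,L\}$, $k\in[m]$ let $\pi_i(A_k) = w_i(k)/\sum_{h=1}^m w_i(h)$ with $w_i(k) = \gamma^{2(i+1)k - k^2+1} + \sum_{r=0}^L\gamma^{(2r+1)(i+1)-r^2-r}$. Let $\overline{\pi}(\xi) = \prod_{i=0}^L \pi_i(A_{\xi_i})$ for $\xi\in[m]^{L+1}$, let $\lambda = (1, 2, \ldots, m)$, let $\mathcal{X}_\lambda$ be the set of states reachable from $\lambda$ by finitely many swaps of adjacent levels, and $\overline{\pi}_\lambda = \overline{\pi}/\overline{\pi}(\mathcal{X}_\lambda)$ on $\mathcal{X}_\lambda$. Let $S \subseteq \mathcal{X}_\lambda$ be the set of states $\xi$ for which there is a sequence $\lambda=\tau^0,\ldots,\tau^N=\xi$, each obtained from the previous by swapping the entries of two adjacent levels, such that every $\tau^s$ differs from $\lambda$ in at most $\lfloor\log_2 L\rfloor - 1$ coordinates, and let $S^C = \mathcal{X}_\lambda\setminus S$. Let $\overline{P}_{pt}$ be a stochastic matrix on $\mathcal{X}_\lambda$ such that $\overline{P}_{pt}(\xi,\tilde\xi) > 0$ with $\xi\neq\tilde\xi$ only if $\tilde\xi$ is obtained from $\xi$ by swapping the entries of two adjacent levels. Then $$\sum_{\xi\in S,\,\tilde\xi\in S^C}\overline{\pi}_\lambda(\xi)\overline{P}_{pt}(\xi,\tilde\xi) \leq 4e\left(\frac{1}{L+1}\right)^{\lfloor\log_2 L\rfloor - 2}.$$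
   Context: A swap of adjacent levels maps $\xi$ to $(j-1,j)\xi$, the vector with entries at positions $j-1$ and $j$ exchanged, $j\in\{1,\ldots,L\}$. Two states differ in coordinate $\ell$ if their $\ell$-th entries are unequal. In the paper $\overline{P}_{pt}$ is the projected parallel tempering chain of a hypothetical instance in which the only moves between modes are swaps of adjacent temperature levels. *)

theory Defs
  imports Complex_Main
begin

text \<open>States are lists of length L+1 (levels 0..L) with entries in {1..m}.
  Swap of adjacent levels j-1 and j, for j in {1..L}.\<close>

definition swap_adj :: "nat \<Rightarrow> nat list \<Rightarrow> nat list" where
  "swap_adj j xi = xi[j - 1 := xi ! j, j := xi ! (j - 1)]"

definition adj_swap :: "nat \<Rightarrow> nat list \<Rightarrow> nat list \<Rightarrow> bool" where
  "adj_swap L xi eta \<longleftrightarrow> (\<exists>j\<in>{1..L}. eta = swap_adj j xi)"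

definition gam :: "nat \<Rightarrow> real" where
  "gam L = (real L + 1) ^ 3"

definition wt :: "nat \<Rightarrow> nat \<Rightarrow> nat \<Rightarrow> real" where
  "wt L i k = gam L powi (2 * (int i + 1) * int k - (int k)^2 + 1)
     + (\<Sum>r\<in>{0..L}. gam L powi ((2 * int r + 1) * (int i + 1) - (int r)^2 - int r))"

definition pii :: "nat \<Rightarrow> nat \<Rightarrow> nat \<Rightarrow> real" where
  "pii L i k = wt L i k / (\<Sum>h\<in>{1..L+1}. wt L i h)"

definition pibar :: "nat \<Rightarrow> nat list \<Rightarrow> real" where
  "pibar L xi = (\<Prod>i\<in>{0..L}. pii L i (xi ! i))"

definition lam :: "nat \<Rightarrow> nat list" where
  "lam L = [1..<L+2]"

definition Xlam :: "nat \<Rightarrow> nat list set" where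
  "Xlam L = {xi. (adj_swap L)\<^sup>*\<^sup>* (lam L) xi}"

definition pilam :: "nat \<Rightarrow> nat list \<Rightarrow> real" where
  "pilam L xi = pibar L xi / (\<Sum>eta\<in>Xlam L. pibar L eta)"

definition ndiff :: "nat list \<Rightarrow> nat list \<Rightarrow> nat" where
  "ndiff xi eta = card {l. l < length xi \<and> xi ! l \<noteq> eta ! l}"

definition Dbound :: "nat \<Rightarrow> int" where
  "Dbound L = \<lfloor>log 2 (real L)\<rfloor> - 1"

definition Sset :: "nat \<Rightarrow> nat list set" where
  "Sset L = {xi. (\<lambda>a b. adj_swap L a b \<and> int (ndiff a (lam L)) \<le> Dbound L
                      \<and> int (ndiff b (lam L)) \<le> Dbound L)\<^sup>*\<^sup>* (lam L) xi}"

end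

(*
  A swap of adjacent levels changes at most two coordinates, so every transition leaving S
  starts at a state that differs from lambda in at least n = floor (log2 L) - 2 coordinates.
  The flow out of S is therefore at most the pilam-mass of those states, which Markov's
  inequality bounds by E[(L+1)^ndiff] / (L+1)^n.  As pilam <= pibar / pibar lambda and pibar is
  a product measure, the moment factorises over the levels; at level i the weights concentrate
  at k = i + 1, the off-diagonal mass being at most (2L+3)/gamma times the diagonal one.  The
  moment is thus at most (1 + (2L+3)/(L+1)^2)^(L+1) <= e^(2 + 1/(L+1)) <= 4e.
*)
theory Submission
  imports Defs "HOL-Analysis.Complex_Transcendental"
begin

lemma sum_lists_prod_nth:
  fixes f :: "nat \<Rightarrow> 'a \<Rightarrow> 'b::comm_semiring_1"
  assumes "finite A"
  shows "(\<Sum>xs\<in>{xs. set xs \<subseteq> A \<and> length xs = n}. \<Prod>i<n. f i (xs ! i)) = (\<Prod>i<n. \<Sum>a\<in>A. f i a)"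
proof (induction n arbitrary: f)
  case 0
  have "{xs. set xs \<subseteq> A \<and> length xs = 0} = {[]}" by auto
  then show ?case by simp
next
  case (Suc n)
  let ?Xs = "{xs. set xs \<subseteq> A \<and> length xs = n}"
  have "(\<Sum>xs\<in>{xs. set xs \<subseteq> A \<and> length xs = Suc n}. \<Prod>i<Suc n. f i (xs ! i))
      = (\<Sum>(xs, a)\<in>?Xs \<times> A. f 0 a * (\<Prod>i<n. f (Suc i) (xs ! i)))"
    unfolding lists_length_Suc_eq
    by (subst sum.reindex)
      (auto simp: inj_on_def prod.lessThan_Suc_shift simp del: prod.lessThan_Suc intro!: sum.cong)
  also have "\<dots> = (\<Sum>a\<in>A. f 0 a) * (\<Sum>xs\<in>?Xs. \<Prod>i<n. f (Suc i) (xs ! i))"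
    by (simp add: sum.cartesian_product[symmetric] sum_product sum.swap[of _ A])
  also have "\<dots> = (\<Prod>i<Suc n. \<Sum>a\<in>A. f i a)"
    using Suc.IH[of "\<lambda>i. f (Suc i)"] by (simp add: prod.lessThan_Suc_shift del: prod.lessThan_Suc)
  finally show ?case .
qed

lemma sum_prod_nth_le_prod_sum:
  fixes f :: "nat \<Rightarrow> 'a \<Rightarrow> 'b::linordered_semidom"
  assumes "finite A" "X \<subseteq> {xs. set xs \<subseteq> A \<and> length xs = n}" "\<And>i a. 0 \<le> f i a"
  shows "(\<Sum>xs\<in>X. \<Prod>i<n. f i (xs ! i)) \<le> (\<Prod>i<n. \<Sum>a\<in>A. f i a)"
proof -
  have "(\<Sum>xs\<in>X. \<Prod>i<n. f i (xs ! i)) \<le> (\<Sum>xs\<in>{xs. set xs \<subseteq> A \<and> length xs = n}. \<Prod>i<n. f i (xs ! i))"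
    using assms by (intro sum_mono2 finite_lists_length_eq prod_nonneg) auto
  also have "\<dots> = (\<Prod>i<n. \<Sum>a\<in>A. f i a)"
    by (rule sum_lists_prod_nth[OF assms(1)])
  finally show ?thesis .
qed

lemma power_ndiff_eq_prod:
  fixes t :: "'a::comm_monoid_mult"
  assumes "length xs = length ys"
  shows "t ^ ndiff xs ys = (\<Prod>i<length xs. if xs ! i = ys ! i then 1 else t)"
proof -
  have "(\<Prod>i<length xs. if xs ! i = ys ! i then 1 else t) = (\<Prod>i\<in>{..<length xs} \<inter> - {l. xs ! l = ys ! l}. t)"
    by (subst prod.If_cases) auto
  also have "{..<length xs} \<inter> - {l. xs ! l = ys ! l} = {l. l < length xs \<and> xs ! l \<noteq> ys ! l}"
    by auto
  finally show ?thesis by (simp add: ndiff_def)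
qed

lemma flow_out_le_mass:
  fixes \<pi> :: "'a \<Rightarrow> real" and P :: "'a \<Rightarrow> 'a \<Rightarrow> real"
  assumes "finite X" "S \<subseteq> X"
    and "\<forall>x\<in>X. 0 \<le> \<pi> x"
    and "\<forall>x\<in>X. \<forall>y\<in>X. 0 \<le> P x y" "\<forall>x\<in>X. (\<Sum>y\<in>X. P x y) = 1"
    and "\<forall>x\<in>S. \<forall>y\<in>X - S. 0 < P x y \<longrightarrow> Q x"
  shows "(\<Sum>x\<in>S. \<Sum>y\<in>X - S. \<pi> x * P x y) \<le> (\<Sum>x\<in>{x\<in>X. Q x}. \<pi> x)"
proof -
  have "(\<Sum>y\<in>X - S. \<pi> x * P x y) \<le> (if Q x then \<pi> x else 0)" if "x \<in> S" for x
  proof (cases "Q x")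
    case True
    have "(\<Sum>y\<in>X - S. \<pi> x * P x y) \<le> (\<Sum>y\<in>X. \<pi> x * P x y)"
      using assms that by (intro sum_mono2) auto
    also have "\<dots> = \<pi> x" using assms that by (auto simp flip: sum_distrib_left)
    finally show ?thesis using True by simp
  next
    case False
    then have "\<forall>y\<in>X - S. P x y = 0"
      using assms that by (metis Diff_iff less_eq_real_def subsetD)
    then show ?thesis using False by simp
  qed
  then have "(\<Sum>x\<in>S. \<Sum>y\<in>X - S. \<pi> x * P x y) \<le> (\<Sum>x\<in>S. if Q x then \<pi> x else 0)"
    by (rule sum_mono)
  also have "\<dots> \<le> (\<Sum>x\<in>X. if Q x then \<pi> x else 0)"
    using assms by (intro sum_mono2) auto
  also have "\<dots> = (\<Sum>x\<in>{x\<in>X. Q x}. \<pi> x)"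
    using assms(1) by (simp add: sum.inter_filter)
  finally show ?thesis .
qed

lemma markov_inequality_sum:
  fixes \<pi> :: "'a \<Rightarrow> real" and t :: real
  assumes "finite X" "\<forall>x\<in>X. 0 \<le> \<pi> x" "1 \<le> t"
  shows "(\<Sum>x\<in>{x\<in>X. n \<le> d x}. \<pi> x) \<le> (\<Sum>x\<in>X. t ^ d x * \<pi> x) / t ^ n"
proof -
  have "\<pi> x \<le> t ^ d x / t ^ n * \<pi> x" if "x \<in> X" "n \<le> d x" for x
  proof -
    have "1 \<le> t ^ d x / t ^ n"
      using assms that by (simp add: power_increasing)
    then have "1 * \<pi> x \<le> t ^ d x / t ^ n * \<pi> x"
      using assms that by (intro mult_right_mono) auto
    then show ?thesis by simp
  qed
  then have "(\<Sum>x\<in>{x\<in>X. n \<le> d x}. \<pi> x) \<le> (\<Sum>x\<in>{x\<in>X. n \<le> d x}. t ^ d x / t ^ n * \<pi> x)"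
    by (intro sum_mono) auto
  also have "\<dots> \<le> (\<Sum>x\<in>X. t ^ d x / t ^ n * \<pi> x)"
    using assms by (intro sum_mono2) auto
  finally show ?thesis by (simp add: sum_divide_distrib)
qed

lemma power_one_plus_le_4e:
  assumes "3 \<le> N"
  shows "(1 + (2 * real N + 1) / real N ^ 2) ^ N \<le> 4 * exp 1"
proof -
  have "(1 + (2 * real N + 1) / real N ^ 2) ^ N \<le> exp ((2 * real N + 1) / real N ^ 2) ^ N"
    by (intro power_mono) auto
  also have "\<dots> = exp 1 * exp 1 * exp (1 / real N)"
    using assms by (simp flip: exp_of_nat_mult exp_add add: power2_eq_square field_simps)
  also have "exp (1 / real N) \<le> 1 + 1 / real N + (1 / real N)^2"
    using assms by (intro exp_bound) auto
  also have "\<dots> \<le> 13 / 9"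
  proof -
    have "3 * real N \<le> real N * real N"
      using assms by (intro mult_right_mono) auto
    then have "9 + real N * 9 \<le> real N * (real N * 4)"
      using assms by linarith
    then show ?thesis
      using assms by (simp add: field_simps power2_eq_square)
  qed
  also have "exp 1 * exp 1 * (13 / 9) \<le> exp 1 * (4::real)"
  proof -
    have "exp 1 * (13 / 9) \<le> (4::real)"
      using e_less_272 by simp
    then show ?thesis
      by (simp add: mult.assoc)
  qed
  finally show ?thesis by (simp add: mult.commute)
qed

lemma sum_powi_le_two_peaks:
  fixes g :: real and e :: "'a \<Rightarrow> int"
  assumes "1 \<le> g" "finite A" "card A \<le> N"
    and "\<forall>x\<in>A. e x \<le> E" "\<forall>x\<in>A - {a, b}. e x \<le> E - d"
  shows "(\<Sum>x\<in>A. g powi e x) \<le> 2 * g powi E + real N * g powi (E - d)"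
proof -
  have "g powi e x \<le> (if x \<in> {a, b} then g powi E else 0) + g powi (E - d)" if "x \<in> A" for x
  proof (cases "x \<in> {a, b}")
    case True
    then have "g powi e x \<le> g powi E"
      using assms that by (intro power_int_increasing) auto
    moreover have "0 \<le> g powi (E - d)"
      using assms by simp
    ultimately show ?thesis using True by simp
  next
    case False
    then show ?thesis using assms that by (simp add: power_int_increasing)
  qed
  then have "(\<Sum>x\<in>A. g powi e x) \<le> (\<Sum>x\<in>A. (if x \<in> {a, b} then g powi E else 0) + g powi (E - d))"
    by (rule sum_mono)
  also have "\<dots> = (\<Sum>x\<in>A \<inter> {a, b}. g powi E) + (\<Sum>x\<in>A. g powi (E - d))"
    by (simp only: sum.distrib sum.inter_restrict[OF assms(2)])
  also have "\<dots> = real (card (A \<inter> {a, b})) * g powi E + real (card A) * g powi (E - d)"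
    by simp
  also have "\<dots> \<le> 2 * g powi E + real N * g powi (E - d)"
  proof (intro add_mono mult_right_mono)
    have "card (A \<inter> {a, b}) \<le> card {a, b}" by (intro card_mono) auto
    also have "\<dots> \<le> 2" by (simp add: card_insert_if)
    finally show "real (card (A \<inter> {a, b})) \<le> 2" by simp
  qed (use assms in auto)
  finally show ?thesis .
qed

lemma gam_ge_27: "2 \<le> L \<Longrightarrow> 27 \<le> gam L"
  using power_mono[of 3 "real L + 1" 3] by (simp add: gam_def)

lemma wt_pos: "2 \<le> L \<Longrightarrow> 0 < wt L i k"
  unfolding wt_def using gam_ge_27[of L] by (intro add_pos_nonneg sum_nonneg) auto

lemma wt_diag_ge: "2 \<le> L \<Longrightarrow> gam L powi ((int i + 1)^2 + 1) \<le> wt L i (i + 1)"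
  unfolding wt_def using gam_ge_27[of L]
  by (auto intro!: sum_nonneg simp: power2_eq_square algebra_simps)

lemma sum_wt_peak_off_diag_le:
  assumes "2 \<le> L" "i \<le> L"
  shows "(\<Sum>k\<in>{1..L+1} - {i+1}. gam L powi (2 * (int i + 1) * int k - (int k)^2 + 1))
    \<le> 2 * gam L powi ((int i + 1)^2) + real L * gam L powi ((int i + 1)^2 - 3)"
proof (rule sum_powi_le_two_peaks[where a = i and b = "i + 2"])
  have sq: "2 * (int i + 1) * int k - (int k)^2 + 1 = (int i + 1)^2 + 1 - (int k - int i - 1)^2" for k
    by (simp add: power2_eq_square algebra_simps)
  show "\<forall>k\<in>{1..L+1} - {i+1}. 2 * (int i + 1) * int k - (int k)^2 + 1 \<le> (int i + 1)^2"
    unfolding sq by (auto simp: int_one_le_iff_zero_less)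
  show "\<forall>k\<in>{1..L+1} - {i+1} - {i, i + 2}.
      2 * (int i + 1) * int k - (int k)^2 + 1 \<le> (int i + 1)^2 - 3"
  proof
    fix k assume "k \<in> {1..L+1} - {i+1} - {i, i + 2}"
    then have "4 \<le> (int k - int i - 1)^2"
      using abs_le_square_iff[of 2 "int k - int i - 1"] by auto
    then show "2 * (int i + 1) * int k - (int k)^2 + 1 \<le> (int i + 1)^2 - 3"
      unfolding sq by simp
  qed
qed (use gam_ge_27[OF assms(1)] assms(2) in auto)

lemma sum_wt_background_le:
  assumes "2 \<le> L"
  shows "(\<Sum>r\<in>{0..L}. gam L powi ((2 * int r + 1) * (int i + 1) - (int r)^2 - int r))
    \<le> 2 * gam L powi ((int i + 1)^2) + real (L + 1) * gam L powi ((int i + 1)^2 - 2)"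
proof (rule sum_powi_le_two_peaks[where a = i and b = "i + 1"])
  have pr: "(2 * int r + 1) * (int i + 1) - (int r)^2 - int r
      = (int i + 1)^2 - (int r - int i) * (int r - int i - 1)" for r
    by (simp add: power2_eq_square algebra_simps)
  show "\<forall>r\<in>{0..L}. (2 * int r + 1) * (int i + 1) - (int r)^2 - int r \<le> (int i + 1)^2"
  proof
    fix r
    have "0 \<le> (int r - int i) * (int r - int i - 1)"
      by (smt (verit) split_mult_pos_le)
    then show "(2 * int r + 1) * (int i + 1) - (int r)^2 - int r \<le> (int i + 1)^2"
      unfolding pr by simp
  qed
  show "\<forall>r\<in>{0..L} - {i, i + 1}.
      (2 * int r + 1) * (int i + 1) - (int r)^2 - int r \<le> (int i + 1)^2 - 2"
  proof
    fix r assume "r \<in> {0..L} - {i, i + 1}"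
    then have "2 \<le> (int r - int i) * (int r - int i - 1)"
      using abs_le_square_iff[of 3 "2 * (int r - int i) - 1"]
      by (auto simp: power2_eq_square algebra_simps)
    then show "(2 * int r + 1) * (int i + 1) - (int r)^2 - int r \<le> (int i + 1)^2 - 2"
      unfolding pr by simp
  qed
qed (use gam_ge_27[OF assms(1)] in auto)

lemma gam_powi_tail_le:
  assumes "2 \<le> L"
  shows "real L * gam L powi (E - 3) + real L * (real L + 1) * gam L powi (E - 2) \<le> gam L powi E"
proof -
  define g where "g = gam L"
  have g: "27 \<le> g" using gam_ge_27[OF assms] by (simp add: g_def)
  have gL: "real L * (real L + 1) + 1 \<le> g"
    by (simp add: g_def gam_def power3_eq_cube algebra_simps)
  have "real L * (real L + 1) * g \<le> (g - 1) * g"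
    using g gL by (intro mult_right_mono) auto
  moreover have "real L \<le> g"
    using gL zero_le_square[of "real L"] by (simp only: distrib_left mult_1_right)
  moreover have "g * g \<le> g ^ 3"
    using g by (simp add: power3_eq_cube)
  ultimately have "real L + real L * (real L + 1) * g \<le> g ^ 3"
    using gL by (simp add: algebra_simps)
  then have "(real L + real L * (real L + 1) * g) * g powi (E - 3) \<le> g ^ 3 * g powi (E - 3)"
    using g by (intro mult_right_mono) auto
  moreover have "g powi (E - 2) = g powi (E - 3) * g" "g powi E = g powi (E - 3) * g ^ 3"
    using power_int_add[of g "E - 3" 1] power_int_add[of g "E - 3" 3] g by simp_all
  ultimately show ?thesis
    by (simp add: g_def algebra_simps)
qed

lemma sum_wt_off_diag_le:
  assumes "2 \<le> L" "i \<le> L"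
  shows "(\<Sum>k\<in>{1..L+1} - {i+1}. wt L i k) \<le> (2 * real L + 3) / gam L * wt L i (i + 1)"
proof -
  define E where "E = (int i + 1)^2"
  have g: "27 \<le> gam L" using gam_ge_27[OF assms(1)] .
  have "(\<Sum>k\<in>{1..L+1} - {i+1}. wt L i k)
      = (\<Sum>k\<in>{1..L+1} - {i+1}. gam L powi (2 * (int i + 1) * int k - (int k)^2 + 1))
        + real L * (\<Sum>r\<in>{0..L}. gam L powi ((2 * int r + 1) * (int i + 1) - (int r)^2 - int r))"
    using assms(2) by (simp add: wt_def sum.distrib)
  also have "\<dots> \<le> 2 * gam L powi E + real L * gam L powi (E - 3)
      + real L * (2 * gam L powi E + real (L + 1) * gam L powi (E - 2))"
    unfolding E_def using sum_wt_peak_off_diag_le[OF assms] sum_wt_background_le[OF assms(1)]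
    by (intro add_mono mult_left_mono) auto
  also have "\<dots> \<le> (2 * real L + 3) * gam L powi E"
    using gam_powi_tail_le[OF assms(1), of E] by (simp add: ring_distribs)
  also have "\<dots> = (2 * real L + 3) / gam L * gam L powi (E + 1)"
    using g by (simp add: power_int_add)
  also have "\<dots> \<le> (2 * real L + 3) / gam L * wt L i (i + 1)"
    using wt_diag_ge[OF assms(1), of i] g by (intro mult_left_mono) (auto simp: E_def)
  finally show ?thesis .
qed

lemma pii_pos: "2 \<le> L \<Longrightarrow> 0 < pii L i k"
  unfolding pii_def by (intro divide_pos_pos sum_pos wt_pos) auto

lemma pibar_pos: "2 \<le> L \<Longrightarrow> 0 < pibar L xi"
  unfolding pibar_def by (intro prod_pos pii_pos) auto

lemma pii_div_pii:
  assumes "2 \<le> L"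
  shows "pii L i k / pii L i j = wt L i k / wt L i j"
proof -
  have "0 < (\<Sum>h\<in>{1..L+1}. wt L i h)"
    using wt_pos[OF assms] by (intro sum_pos) auto
  then show ?thesis by (simp add: pii_def)
qed

lemma level_factor_le:
  assumes "2 \<le> L" "i \<le> L" "0 \<le> t"
  shows "(\<Sum>k\<in>{1..L+1}. (if k = i + 1 then 1 else t) * (pii L i k / pii L i (i + 1)))
    \<le> 1 + t * (2 * real L + 3) / gam L"
proof -
  define F where "F k = (if k = i + 1 then 1 else t) * (pii L i k / pii L i (i + 1))" for k
  define K where "K = {1..L+1} - {i+1}"
  have "(\<Sum>k\<in>{1..L+1}. F k) = F (i + 1) + (\<Sum>k\<in>K. F k)"
    using assms(2) unfolding K_def by (intro sum.remove) auto
  also have "F (i + 1) = 1"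
    using pii_pos[OF assms(1), of i "i + 1"] by (simp add: F_def)
  also have "(\<Sum>k\<in>K. F k) = t * ((\<Sum>k\<in>K. wt L i k) / wt L i (i + 1))"
    by (auto simp: F_def K_def pii_div_pii[OF assms(1)] sum_distrib_left sum_divide_distrib intro!: sum.cong)
  also have "t * ((\<Sum>k\<in>K. wt L i k) / wt L i (i + 1)) \<le> t * ((2 * real L + 3) / gam L)"
    using sum_wt_off_diag_le[OF assms(1,2)] wt_pos[OF assms(1), of i "i + 1"] assms(3)
    by (intro mult_left_mono) (simp_all add: K_def pos_divide_le_eq)
  finally show ?thesis
    by (simp add: F_def)
qed

lemma length_lam [simp]: "length (lam L) = L + 1"
  by (simp add: lam_def)

lemma nth_lam: "l \<le> L \<Longrightarrow> lam L ! l = l + 1"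
  unfolding lam_def by (subst nth_upt) auto

lemma lam_in_Xlam: "lam L \<in> Xlam L"
  by (simp add: Xlam_def)

lemma length_swap_adj [simp]: "length (swap_adj j xs) = length xs"
  by (simp add: swap_adj_def)

lemma set_swap_adj: "j < length xs \<Longrightarrow> set (swap_adj j xs) = set xs"
  by (simp add: swap_adj_def)

lemma Xlam_subset_lists: "Xlam L \<subseteq> {xs. set xs \<subseteq> {1..L+1} \<and> length xs = L + 1}"
proof
  fix xs assume "xs \<in> Xlam L"
  then have "(adj_swap L)\<^sup>*\<^sup>* (lam L) xs" by (simp add: Xlam_def)
  then show "xs \<in> {xs. set xs \<subseteq> {1..L+1} \<and> length xs = L + 1}"
  proof (induction rule: rtranclp_induct)
    case base
    then show ?case by (auto simp: lam_def)
  next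
    case (step ys zs)
    then show ?case
      by (auto simp: adj_swap_def set_swap_adj)
  qed
qed

lemma finite_Xlam: "finite (Xlam L)"
  by (rule finite_subset[OF Xlam_subset_lists finite_lists_length_eq]) simp

lemma sum_pibar_Xlam_ge: "2 \<le> L \<Longrightarrow> pibar L (lam L) \<le> (\<Sum>eta\<in>Xlam L. pibar L eta)"
  using finite_Xlam lam_in_Xlam pibar_pos by (intro member_le_sum) (auto intro: less_imp_le)

lemma pilam_nonneg: "2 \<le> L \<Longrightarrow> 0 \<le> pilam L xi"
  unfolding pilam_def using pibar_pos sum_pibar_Xlam_ge[of L]
  by (smt (verit) divide_nonneg_pos)

lemma pilam_le: "2 \<le> L \<Longrightarrow> pilam L xi \<le> pibar L xi / pibar L (lam L)"
  unfolding pilam_def using pibar_pos sum_pibar_Xlam_ge[of L]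
  by (intro divide_left_mono) (auto intro: less_imp_le mult_pos_pos order.strict_trans2)

lemma sum_power_ndiff_pilam_le:
  assumes "2 \<le> L"
  shows "(\<Sum>xi\<in>Xlam L. (real L + 1) ^ ndiff xi (lam L) * pilam L xi)
    \<le> (1 + (2 * real L + 3) / (real L + 1)^2) ^ (L + 1)"
proof -
  define t where "t = real L + 1"
  define f where "f i k = (if k = i + 1 then 1 else t) * (pii L i k / pii L i (i + 1))" for i k
  have f_nonneg: "0 \<le> f i k" for i k
    using pii_pos[OF assms] by (simp add: f_def t_def less_imp_le)
  have levels: "{0..L} = {..<L+1}" by auto
  have "t ^ ndiff xi (lam L) * pilam L xi \<le> (\<Prod>i<L+1. f i (xi ! i))" if "xi \<in> Xlam L" for xi
  proof -
    have len: "length xi = L + 1"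
      using that Xlam_subset_lists by blast
    have "t ^ ndiff xi (lam L) * pilam L xi \<le> t ^ ndiff xi (lam L) * (pibar L xi / pibar L (lam L))"
      using pilam_le[OF assms] by (intro mult_left_mono) (auto simp: t_def)
    also have "\<dots> = (\<Prod>i<L+1. f i (xi ! i))"
      using len by (simp add: power_ndiff_eq_prod pibar_def levels nth_lam prod.distrib
          prod_dividef f_def)
    finally show ?thesis .
  qed
  then have "(\<Sum>xi\<in>Xlam L. t ^ ndiff xi (lam L) * pilam L xi) \<le> (\<Sum>xi\<in>Xlam L. \<Prod>i<L+1. f i (xi ! i))"
    by (rule sum_mono)
  also have "\<dots> \<le> (\<Prod>i<L+1. \<Sum>k\<in>{1..L+1}. f i k)"
    using Xlam_subset_lists f_nonneg by (intro sum_prod_nth_le_prod_sum) auto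
  also have "\<dots> \<le> (\<Prod>i<L+1. 1 + t * (2 * real L + 3) / gam L)"
  proof (intro prod_mono conjI)
    fix i assume "i \<in> {..<L+1}"
    then show "(\<Sum>k\<in>{1..L+1}. f i k) \<le> 1 + t * (2 * real L + 3) / gam L"
      unfolding f_def by (intro level_factor_le[OF assms]) (auto simp: t_def)
  qed (intro sum_nonneg f_nonneg)
  also have "\<dots> = (1 + (2 * real L + 3) / (real L + 1)^2) ^ (L + 1)"
    by (simp add: t_def gam_def power2_eq_square power3_eq_cube)
  finally show ?thesis by (simp add: t_def)
qed

lemma ndiff_swap_adj_le: "ndiff (swap_adj j xs) ys \<le> ndiff xs ys + 2"
proof -
  have "{l. l < length (swap_adj j xs) \<and> swap_adj j xs ! l \<noteq> ys ! l}
      \<subseteq> {l. l < length xs \<and> xs ! l \<noteq> ys ! l} \<union> {j - 1, j}"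
  proof -
    have "swap_adj j xs ! l = xs ! l" if "l \<notin> {j - 1, j}" for l
      using that by (simp add: swap_adj_def)
    then show ?thesis by auto
  qed
  then have "ndiff (swap_adj j xs) ys \<le> card ({l. l < length xs \<and> xs ! l \<noteq> ys ! l} \<union> {j - 1, j})"
    unfolding ndiff_def by (intro card_mono) auto
  also have "\<dots> \<le> ndiff xs ys + card {j - 1, j}"
    unfolding ndiff_def by (rule card_Un_le)
  also have "card {j - 1, j} \<le> 2"
    by (simp add: card_insert_if)
  finally show ?thesis by simp
qed

definition bounded_swap :: "nat \<Rightarrow> nat list \<Rightarrow> nat list \<Rightarrow> bool" where
  "bounded_swap L xi eta \<longleftrightarrow> adj_swap L xi eta
     \<and> int (ndiff xi (lam L)) \<le> Dbound L \<and> int (ndiff eta (lam L)) \<le> Dbound L"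

lemma Sset_eq: "Sset L = {xi. (bounded_swap L)\<^sup>*\<^sup>* (lam L) xi}"
  by (simp add: Sset_def bounded_swap_def [abs_def])

lemma Sset_subset_Xlam: "Sset L \<subseteq> Xlam L"
  unfolding Sset_eq Xlam_def
  by (auto elim: rtranclp_mono[THEN predicate2D, rotated] simp: bounded_swap_def)

lemma Dbound_nonneg: "2 \<le> L \<Longrightarrow> 0 \<le> Dbound L"
  unfolding Dbound_def by (simp add: le_log_iff)

lemma ndiff_le_Dbound_if_Sset:
  assumes "2 \<le> L" "xi \<in> Sset L"
  shows "int (ndiff xi (lam L)) \<le> Dbound L"
proof -
  have "(bounded_swap L)\<^sup>*\<^sup>* (lam L) xi"
    using assms(2) by (simp add: Sset_eq)
  then show ?thesis
  proof (cases rule: rtranclp.cases)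
    case rtrancl_refl
    then show ?thesis using Dbound_nonneg[OF assms(1)] by (simp add: ndiff_def)
  next
    case (rtrancl_into_rtrancl eta)
    then show ?thesis by (simp add: bounded_swap_def)
  qed
qed

lemma ndiff_ge_if_leaving_Sset:
  assumes "2 \<le> L" "xi \<in> Sset L" "eta \<notin> Sset L" "adj_swap L xi eta"
  shows "nat (\<lfloor>log 2 (real L)\<rfloor> - 2) \<le> ndiff xi (lam L)"
proof -
  have "\<not> bounded_swap L xi eta"
    using assms(2,3) by (auto simp: Sset_eq intro: rtranclp.rtrancl_into_rtrancl)
  then have "Dbound L < int (ndiff eta (lam L))"
    using assms ndiff_le_Dbound_if_Sset by (auto simp: bounded_swap_def)
  moreover have "ndiff eta (lam L) \<le> ndiff xi (lam L) + 2"
    using assms(4) ndiff_swap_adj_le by (auto simp: adj_swap_def)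
  ultimately show ?thesis
    by (simp add: Dbound_def nat_le_iff)
qed

theorem lemma15:
  fixes L :: nat and P :: "nat list \<Rightarrow> nat list \<Rightarrow> real"
  assumes "L \<ge> 2"
    and "\<forall>xi\<in>Xlam L. \<forall>eta\<in>Xlam L. P xi eta \<ge> 0"
    and "\<forall>xi\<in>Xlam L. (\<Sum>eta\<in>Xlam L. P xi eta) = 1"
    and "\<forall>xi\<in>Xlam L. \<forall>eta\<in>Xlam L. xi \<noteq> eta \<and> P xi eta > 0 \<longrightarrow> adj_swap L xi eta"
  shows "(\<Sum>xi\<in>Sset L. \<Sum>eta\<in>Xlam L - Sset L. pilam L xi * P xi eta)
           \<le> 4 * exp 1 * (1 / (real L + 1)) powi (\<lfloor>log 2 (real L)\<rfloor> - 2)"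
proof -
  define k where "k = \<lfloor>log 2 (real L)\<rfloor> - 2"
  define n where "n = nat k"
  define t where "t = real L + 1"
  have leaving: "\<forall>xi\<in>Sset L. \<forall>eta\<in>Xlam L - Sset L. 0 < P xi eta \<longrightarrow> n \<le> ndiff xi (lam L)"
  proof (intro ballI impI)
    fix xi eta assume xi: "xi \<in> Sset L" and eta: "eta \<in> Xlam L - Sset L" and "0 < P xi eta"
    then have adj: "adj_swap L xi eta"
      using assms(4) subsetD[OF Sset_subset_Xlam xi] by auto
    show "n \<le> ndiff xi (lam L)"
      using ndiff_ge_if_leaving_Sset[OF assms(1) xi _ adj] eta by (simp add: n_def k_def)
  qed
  have "(\<Sum>xi\<in>Sset L. \<Sum>eta\<in>Xlam L - Sset L. pilam L xi * P xi eta)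
      \<le> (\<Sum>xi\<in>{xi\<in>Xlam L. n \<le> ndiff xi (lam L)}. pilam L xi)"
    by (rule flow_out_le_mass[OF finite_Xlam Sset_subset_Xlam _ assms(2,3) leaving])
      (simp add: pilam_nonneg[OF assms(1)])
  also have "\<dots> \<le> (\<Sum>xi\<in>Xlam L. t ^ ndiff xi (lam L) * pilam L xi) / t ^ n"
    by (rule markov_inequality_sum[OF finite_Xlam]) (simp_all add: pilam_nonneg[OF assms(1)] t_def)
  also have "\<dots> \<le> 4 * exp 1 / t ^ n"
  proof (rule divide_right_mono)
    have "(1 + (2 * real (L + 1) + 1) / real (L + 1) ^ 2) ^ (L + 1) \<le> 4 * exp 1"
      by (rule power_one_plus_le_4e) (use assms(1) in simp)
    then show "(\<Sum>xi\<in>Xlam L. t ^ ndiff xi (lam L) * pilam L xi) \<le> 4 * exp 1"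
      using sum_power_ndiff_pilam_le[OF assms(1)] by (simp add: t_def add_ac)
  qed (simp add: t_def)
  also have "\<dots> = 4 * exp 1 * (1 / t) powi int n"
    by (simp add: power_one_over)
  \<comment> \<open>k is negative for L < 4; then n = 0 and this step only uses 1 / t \<le> 1.\<close>
  also have "\<dots> \<le> 4 * exp 1 * (1 / t) powi k"
    by (intro mult_left_mono power_int_decreasing) (auto simp: n_def t_def)
  finally show ?thesis by (simp add: k_def t_def)
qed

end
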